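(* Let $q>1$, $0<u<1$ and let $n\ge0$ be an integer. Run the following procedure. Start with $N=1$, $\lambda$ the empty partition, and a counter $r=n$. Step 1: if $r=0$ go to Step 3; otherwise set $h=1-q^{-r}$. Step 2: flip a (fresh, independent) coin with heads probability $h$. If tails, set $N\leftarrow N+1$ and repeat Step 2. If heads, set $r\leftarrow r-1$, choose a column $S$ with $\Pr(S=1)=\frac{q^{N-\lambda'_1}-1}{q^N-1}$ and $\Pr(S=s)=\frac{q^{N-\lambda'_s}-q^{N-\lambda'_{s-1}}}{q^N-1}$ for $s>1$, add a box to column $S$ of $\lambda$, and go to Step 1. Step 3: choose $S$ with $\Pr(S=1)=q^{-\lambda'_1}$ and $\Pr(S=s)=q^{-\lambda'_s}-q^{-\lambda'_{s-1}}$ for $s>1$, add a box to column $S$, and output $\lambda$. Then the output is distributed according to $N_{u,q}$ conditioned on $|\lambda|=n+1$.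
   Context: $\lambda'_s$ is the length of column $s$ of the diagram of $\lambda$; adding a box to column $s$ increases $\lambda'_s$ by one. $N_{u,q}(\lambda)=\prod_{r\ge1}(1-u/q^r)\frac{u^{|\lambda|-1}(q^{\lambda'_1}-1)}{\prod_i q^{(\lambda'_i)^2}(\frac1q)_{m_i(\lambda)}}$ for partitions $\lambda$ of positive integers, where $m_i(\lambda)$ is the multiplicity of part $i$ and $(\frac1q)_i=\prod_{j=1}^i(1-q^{-j})$. *)

theory Defs
  imports "HOL-Analysis.Analysis"
begin

definition partitions_of :: "nat \<Rightarrow> nat list set" where
  "partitions_of m = {xs. sorted_wrt (\<ge>) xs \<and> 0 \<notin> set xs \<and> sum_list xs = m}"

text \<open>Largest part (= number of columns); 0 for the empty partition.\<close>
definition first_part :: "nat list \<Rightarrow> nat" where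
  "first_part lam = Max (insert 0 (set lam))"

text \<open>Length of column s (s \<ge> 1) of the diagram: number of parts \<ge> s.\<close>
definition col_len :: "nat list \<Rightarrow> nat \<Rightarrow> nat" where
  "col_len lam s = length (filter (\<lambda>x. s \<le> x) lam)"

text \<open>Add a box to column s: it goes into row (col_len lam s + 1).\<close>
definition add_box :: "nat list \<Rightarrow> nat \<Rightarrow> nat list" where
  "add_box lam s = (let i = col_len lam s in
     if i < length lam then lam[i := lam ! i + 1] else lam @ [1])"

definition qpoch_inv :: "real \<Rightarrow> nat \<Rightarrow> real" where
  "qpoch_inv q m = (\<Prod>j\<in>{1..m}. 1 - q powi (- int j))"

definition Nuq :: "real \<Rightarrow> real \<Rightarrow> nat list \<Rightarrow> real" where
  "Nuq u q lam =
     prodinf (\<lambda>r. 1 - u / q ^ (Suc r)) *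
     (u ^ (sum_list lam - 1) * (q ^ col_len lam 1 - 1) /
      (\<Prod>i\<in>{1..first_part lam}. q ^ ((col_len lam i)\<^sup>2) * qpoch_inv q (count_list lam i)))"

definition step2_prob :: "real \<Rightarrow> nat \<Rightarrow> nat list \<Rightarrow> nat \<Rightarrow> real" where
  "step2_prob q N lam s =
     (if s = 1 then (q powi (int N - int (col_len lam 1)) - 1) / (q ^ N - 1)
      else (q powi (int N - int (col_len lam s)) - q powi (int N - int (col_len lam (s - 1))))
             / (q ^ N - 1))"

definition step3_prob :: "real \<Rightarrow> nat list \<Rightarrow> nat \<Rightarrow> real" where
  "step3_prob q lam s =
     (if s = 1 then q powi (- int (col_len lam 1))
      else q powi (- int (col_len lam s)) - q powi (- int (col_len lam (s - 1))))"

text \<open>proc_prob q r N lam mu: probability that the procedure, started in the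
  state (counter r, value N, partition lam) at Step 1, outputs mu.
  Columns s > first_part lam + 1 have probability 0 in both steps, so the column
  sums range over 1..first_part lam + 1.  In Step 2 the event "k tails then heads"
  has probability (q^{-r})^k (1 - q^{-r}) and leaves N increased by k.\<close>
fun proc_prob :: "real \<Rightarrow> nat \<Rightarrow> nat \<Rightarrow> nat list \<Rightarrow> nat list \<Rightarrow> real" where
  "proc_prob q 0 N lam mu =
     (\<Sum>s\<in>{1..Suc (first_part lam)}. step3_prob q lam s * (if add_box lam s = mu then 1 else 0))"
| "proc_prob q (Suc r) N lam mu =
     (\<Sum>k. (q powi (- int (Suc r))) ^ k * (1 - q powi (- int (Suc r))) *
        (\<Sum>s\<in>{1..Suc (first_part lam)}.
            step2_prob q (N + k) lam s * proc_prob q r (N + k) (add_box lam s) mu))"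

end

theory Submission
  imports Defs
begin

text \<open>
  Write \<open>w(\<lambda>) = \<Prod>\<^sub>i q\<^bsup>\<lambda>'\<^sub>i\<^sup>2\<^esup> (1/q)\<^bsub>m\<^sub>i(\<lambda>)\<^esub>\<close> (\<open>aut_weight\<close>) for the denominator of \<open>N\<^sub>u\<^sub>,\<^sub>q\<close>.
  The key identity is that the Step 3 probability of column \<open>s\<close> times \<open>w(\<lambda> + box in s)\<close>
  equals \<open>(q\<^bsup>\<lambda>'\<^sub>s+1\<^esup> - q\<^bsup>\<lambda>'\<^sub>s\<^sub>+\<^sub>1\<^esup>) w(\<lambda>)\<close>.  Regrouping by the partition \<open>\<nu>\<close> that results,
  the sum over the corners of \<open>\<nu>\<close> telescopes, so Step 3 maps the measure \<open>1/w(\<lambda>)\<close> on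
  partitions of \<open>j\<close> to \<open>(q\<^bsup>\<nu>'\<^sub>1\<^esup> - 1)/w(\<nu>)\<close> on partitions of \<open>j + 1\<close>; likewise Step 2 at value
  \<open>N\<close> maps \<open>(x;q)\<^bsub>\<lambda>'\<^sub>1\<^esub>/w(\<lambda>)\<close> to \<open>(x;q)\<^bsub>\<nu>'\<^sub>1\<^esub> (q\<^bsup>\<nu>'\<^sub>1\<^esup> - 1)/((1 - x) w(\<nu>))\<close> with \<open>x = q\<^sup>-\<^sup>N\<close>.

  Hence, by induction on the number of heads, when the counter is \<open>r\<close> the state \<open>(N, \<lambda>)\<close> has
  law proportional to \<open>q\<^bsup>-r(N-1)\<^esup> ((q\<^sup>-\<^sup>N;q)\<^bsub>\<lambda>'\<^sub>1\<^esub> - (q\<^bsup>1-N\<^esup>;q)\<^bsub>\<lambda>'\<^sub>1\<^esub>)/w(\<lambda>)\<close>: the geometric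
  number of tails shifts \<open>N\<close>, and along each diagonal of constant final \<open>N\<close> the differences
  telescope back to a single \<open>(x;q)\<^bsub>\<lambda>'\<^sub>1\<^esub>\<close>.  At \<open>r = 0\<close> the differences sum to \<open>1\<close> over \<open>N\<close>,
  and the final Step 3 gives the law proportional to \<open>(q\<^bsup>\<nu>'\<^sub>1\<^esup> - 1)/w(\<nu>)\<close>, i.e. to \<open>N\<^sub>u\<^sub>,\<^sub>q\<close>.
\<close>

section \<open>Partitions and their columns\<close>

definition is_partition :: "nat list \<Rightarrow> bool" where
  "is_partition xs \<longleftrightarrow> sorted_wrt (\<ge>) xs \<and> 0 \<notin> set xs"

lemma mem_partitions_of_iff: "xs \<in> partitions_of m \<longleftrightarrow> is_partition xs \<and> sum_list xs = m"
  by (simp add: partitions_of_def is_partition_def)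

lemma length_le_sum_list: "0 \<notin> set xs \<Longrightarrow> length xs \<le> sum_list (xs :: nat list)"
  by (induction xs) (auto simp: Suc_le_eq)

lemma finite_partitions_of: "finite (partitions_of m)"
proof -
  have "partitions_of m \<subseteq> {xs. set xs \<subseteq> {0..m} \<and> length xs \<le> m}"
  proof
    fix xs assume "xs \<in> partitions_of m"
    then have "0 \<notin> set xs" "sum_list xs = m" by (auto simp: partitions_of_def)
    then show "xs \<in> {xs. set xs \<subseteq> {0..m} \<and> length xs \<le> m}"
      using length_le_sum_list[of xs] member_le_sum_list[of _ xs] by auto
  qed
  moreover have "finite {xs. set xs \<subseteq> {0..m} \<and> length xs \<le> m}"
    by (rule finite_lists_length_le) simp
  ultimately show ?thesis by (rule finite_subset)
qed

lemma partitions_of_0: "partitions_of 0 = {[]}"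
proof -
  have "xs = []" if "0 \<notin> set xs" "sum_list xs = 0" for xs :: "nat list"
    using length_le_sum_list[OF that(1)] that(2) by simp
  then show ?thesis by (auto simp: partitions_of_def)
qed

lemma partitions_of_1: "partitions_of 1 = {[1]}"
proof -
  have "xs = [1]" if "0 \<notin> set xs" "sum_list xs = 1" for xs :: "nat list"
    using that length_le_sum_list[OF that(1)] by (cases xs) auto
  then show ?thesis by (auto simp: partitions_of_def)
qed

lemma col_len_le_length: "col_len xs t \<le> length xs"
  by (simp add: col_len_def)

lemma col_len_1: "0 \<notin> set xs \<Longrightarrow> col_len xs 1 = length xs"
  unfolding col_len_def by (induction xs) auto

lemma col_len_antimono: "t \<le> t' \<Longrightarrow> col_len xs t' \<le> col_len xs t"
  unfolding col_len_def by (induction xs) auto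

lemma col_len_eq_Suc_plus_count: "col_len xs i = col_len xs (Suc i) + count_list xs i"
  unfolding col_len_def by (induction xs) auto

lemma le_nth_iff_less_col_len:
  assumes "sorted_wrt (\<ge>) xs" "k < length xs"
  shows "t \<le> xs ! k \<longleftrightarrow> k < col_len xs t"
  using assms
proof (induction xs arbitrary: k)
  case (Cons a ys)
  show ?case
  proof (cases "t \<le> a")
    case True
    then show ?thesis using Cons by (cases k) (auto simp: col_len_def)
  next
    case False
    have "filter (\<lambda>x. t \<le> x) ys = []" using Cons.prems False
      by (auto simp: filter_empty_conv)
    moreover have "\<not> t \<le> (a # ys) ! k" using Cons.prems False
      by (cases k) (auto simp: set_conv_nth)
    ultimately show ?thesis using False by (simp add: col_len_def)
  qed
qed simp

lemma col_len_pos_iff: "1 \<le> t \<Longrightarrow> 0 < col_len xs t \<longleftrightarrow> t \<le> first_part xs"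
proof -
  assume "1 \<le> t"
  have "0 < col_len xs t \<longleftrightarrow> (\<exists>x\<in>set xs. t \<le> x)"
    unfolding col_len_def by (induction xs) auto
  also have "\<dots> \<longleftrightarrow> t \<le> first_part xs"
  proof
    assume "\<exists>x\<in>set xs. t \<le> x"
    then show "t \<le> first_part xs" unfolding first_part_def
      by (meson Max_ge finite_insert finite_set insertCI order_trans)
  next
    assume "t \<le> first_part xs"
    with \<open>1 \<le> t\<close> have "first_part xs \<noteq> 0" by auto
    then have "first_part xs \<in> set xs" unfolding first_part_def
      by (metis Max_in empty_not_insert finite_insert finite_set insertE)
    with \<open>t \<le> first_part xs\<close> show "\<exists>x\<in>set xs. t \<le> x" by blast
  qed
  finally show ?thesis .
qed

lemma col_len_beyond_first_part: "first_part xs < t \<Longrightarrow> col_len xs t = 0"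
  using col_len_pos_iff[of t xs] by auto

lemma col_len_list_update:
  "i < length xs \<Longrightarrow> col_len (xs[i := v]) t + (if t \<le> xs ! i then 1 else 0)
     = col_len xs t + (if t \<le> v then 1 else 0)"
  unfolding col_len_def
proof (induction xs arbitrary: i)
  case (Cons a xs)
  then show ?case by (cases i) auto
qed simp

lemma sum_list_list_update_nat:
  "i < length xs \<Longrightarrow> sum_list (xs[i := v]) + xs ! i = sum_list xs + (v :: nat)"
proof (induction xs arbitrary: i)
  case (Cons a xs)
  then show ?case by (cases i) auto
qed simp

lemma sorted_wrt_ge_list_update:
  assumes "sorted_wrt (\<ge>) xs"
    and "\<And>j. j < i \<Longrightarrow> v \<le> xs ! j" and "\<And>j. i < j \<Longrightarrow> j < length xs \<Longrightarrow> xs ! j \<le> v"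
  shows "sorted_wrt (\<ge>) (xs[i := v])"
  unfolding sorted_wrt_iff_nth_less
proof (intro allI impI)
  fix a b assume "a < b" "b < length (xs[i := v])"
  then show "xs[i := v] ! b \<le> xs[i := v] ! a"
    using assms by (cases "a = i"; cases "b = i") (auto simp: sorted_wrt_iff_nth_less)
qed

lemma partition_eqI:
  assumes "is_partition a" "is_partition b" and cols: "\<And>t. 1 \<le> t \<Longrightarrow> col_len a t = col_len b t"
  shows "a = b"
proof -
  have sorted: "sorted_wrt (\<ge>) a" "sorted_wrt (\<ge>) b" and "0 \<notin> set a" "0 \<notin> set b"
    using assms by (auto simp: is_partition_def)
  then have len: "length a = length b"
    using cols[of 1] col_len_1[of a] col_len_1[of b] by simp
  show ?thesis
  proof (rule nth_equalityI[OF len])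
    fix k assume k: "k < length a"
    have "a ! k \<ge> 1" "b ! k \<ge> 1"
      using \<open>0 \<notin> set a\<close> \<open>0 \<notin> set b\<close> k len by (metis in_set_conv_nth less_one not_less)+
    then show "a ! k = b ! k"
      using le_nth_iff_less_col_len[OF sorted(1) k] le_nth_iff_less_col_len[OF sorted(2)] k len cols
      by (metis le_antisym order_refl)
  qed
qed

definition addable :: "nat list \<Rightarrow> nat \<Rightarrow> bool" where
  "addable lam s \<longleftrightarrow> 1 \<le> s \<and> (s = 1 \<or> col_len lam s < col_len lam (s - 1))"

definition corner :: "nat list \<Rightarrow> nat \<Rightarrow> bool" where
  "corner nu s \<longleftrightarrow> 1 \<le> s \<and> col_len nu (Suc s) < col_len nu s"

lemma addable_le_Suc_first_part: "addable lam s \<Longrightarrow> s \<le> Suc (first_part lam)"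
proof (cases "s = 1")
  case False
  assume "addable lam s"
  with False have "0 < col_len lam (s - 1)" "1 \<le> s - 1" by (auto simp: addable_def)
  then show ?thesis using col_len_pos_iff[of "s - 1" lam] by auto
qed simp

lemma not_addable_imp_col_len_eq:
  "1 \<le> s \<Longrightarrow> \<not> addable lam s \<Longrightarrow> s \<noteq> 1 \<and> col_len lam s = col_len lam (s - 1)"
  using col_len_antimono[of "s - 1" s lam] by (auto simp: addable_def)

lemma add_box_cases:
  assumes "is_partition lam" "addable lam s"
  obtains "s = 1" "add_box lam s = lam @ [1]"
  | "2 \<le> s" "col_len lam s < length lam" "lam ! col_len lam s = s - 1"
    "add_box lam s = lam[col_len lam s := s]"
proof (cases "s = 1")
  case True
  have "col_len lam 1 = length lam" using assms(1) col_len_1 by (simp add: is_partition_def)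
  with True show ?thesis using that(1) by (simp add: add_box_def Let_def)
next
  case False
  have sorted: "sorted_wrt (\<ge>) lam" using assms by (simp add: is_partition_def)
  define i where "i = col_len lam s"
  have s2: "2 \<le> s" and lt: "i < col_len lam (s - 1)"
    using assms False by (auto simp: addable_def i_def)
  then have il: "i < length lam" using col_len_le_length[of lam "s - 1"] by linarith
  have "\<not> s \<le> lam ! i" "s - 1 \<le> lam ! i"
    using le_nth_iff_less_col_len[OF sorted il, of s] le_nth_iff_less_col_len[OF sorted il, of "s - 1"]
      lt i_def by auto
  then have nth: "lam ! i = s - 1" by simp
  have "add_box lam s = lam[i := s]"
    unfolding add_box_def Let_def i_def[symmetric] using il nth s2 by simp
  then show ?thesis using that(2) s2 il nth i_def by simp
qed

lemma
  assumes "is_partition lam" "addable lam s"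
  shows is_partition_add_box: "is_partition (add_box lam s)"
    and sum_list_add_box: "sum_list (add_box lam s) = Suc (sum_list lam)"
    and col_len_add_box: "1 \<le> t \<Longrightarrow> col_len (add_box lam s) t = col_len lam t + (if t = s then 1 else 0)"
proof -
  have sorted: "sorted_wrt (\<ge>) lam" and nz: "0 \<notin> set lam"
    using assms(1) by (auto simp: is_partition_def)
  from assms have "is_partition (add_box lam s) \<and> sum_list (add_box lam s) = Suc (sum_list lam) \<and>
     (1 \<le> t \<longrightarrow> col_len (add_box lam s) t = col_len lam t + (if t = s then 1 else 0))"
  proof (cases rule: add_box_cases)
    case 1
    have "\<forall>x\<in>set lam. 1 \<le> x" using nz by (metis less_one not_less)
    with 1 sorted nz show ?thesis by (auto simp: is_partition_def sorted_wrt_append col_len_def)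
  next
    case 2
    define i where "i = col_len lam s"
    have "sorted_wrt (\<ge>) (lam[i := s])"
    proof (rule sorted_wrt_ge_list_update[OF sorted])
      show "s \<le> lam ! j" if "j < i" for j
        using le_nth_iff_less_col_len[OF sorted, of j s] that 2(2) i_def by simp
      show "lam ! j \<le> s" if "i < j" "j < length lam" for j
      proof -
        have "lam ! j \<le> lam ! i" using sorted that by (simp add: sorted_wrt_iff_nth_less)
        then show ?thesis using 2(3) i_def by simp
      qed
    qed
    moreover have "0 \<notin> set (lam[i := s])"
      using set_update_subset_insert[of lam i s] nz 2(1) by auto
    moreover have "sum_list (lam[i := s]) = Suc (sum_list lam)"
      using sum_list_list_update_nat[of i lam s] 2 i_def by simp
    moreover have "1 \<le> t \<Longrightarrow> col_len (lam[i := s]) t = col_len lam t + (if t = s then 1 else 0)"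
      using col_len_list_update[of i lam s t] 2 i_def by (auto split: if_splits)
    ultimately show ?thesis using 2(4) i_def by (simp add: is_partition_def)
  qed
  then show "is_partition (add_box lam s)" "sum_list (add_box lam s) = Suc (sum_list lam)"
    "1 \<le> t \<Longrightarrow> col_len (add_box lam s) t = col_len lam t + (if t = s then 1 else 0)"
    by auto
qed

lemma corner_add_box:
  assumes "is_partition lam" "addable lam s"
  shows "corner (add_box lam s) s"
  using assms col_len_add_box[OF assms, of s] col_len_add_box[OF assms, of "Suc s"]
    col_len_antimono[of s "Suc s" lam] by (simp add: corner_def addable_def)

lemma corner_le_first_part: "corner nu s \<Longrightarrow> s \<le> first_part nu"
  using col_len_pos_iff[of s nu] by (auto simp: corner_def)

lemma add_box_inj:
  assumes "is_partition lam" "addable lam s" "is_partition lam'" "addable lam' s"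
    and "add_box lam s = add_box lam' s"
  shows "lam = lam'"
proof (rule partition_eqI[OF assms(1,3)])
  fix t :: nat assume "1 \<le> t"
  then show "col_len lam t = col_len lam' t"
    using col_len_add_box[OF assms(1,2)] col_len_add_box[OF assms(3,4)] assms(5) by force
qed

lemma corner_nth:
  assumes "is_partition nu" "corner nu s"
  shows "col_len nu s - 1 < length nu" "nu ! (col_len nu s - 1) = s"
proof -
  have sorted: "sorted_wrt (\<ge>) nu" using assms(1) by (simp add: is_partition_def)
  have cl: "col_len nu (Suc s) < col_len nu s" using assms(2) by (simp add: corner_def)
  then show rl: "col_len nu s - 1 < length nu" using col_len_le_length[of nu s] by linarith
  have "s \<le> nu ! (col_len nu s - 1)" "\<not> Suc s \<le> nu ! (col_len nu s - 1)"
    using le_nth_iff_less_col_len[OF sorted rl, of s] le_nth_iff_less_col_len[OF sorted rl, of "Suc s"] cl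
    by auto
  then show "nu ! (col_len nu s - 1) = s" by simp
qed

lemma corner_1_imp_add_box_butlast:
  assumes nu: "is_partition nu" and "corner nu 1"
  shows "is_partition (butlast nu)" "add_box (butlast nu) 1 = nu"
proof -
  have "0 \<notin> set nu" using nu by (simp add: is_partition_def)
  then have "nu \<noteq> []" "nu ! (length nu - 1) = 1"
    using corner_nth[OF assms] col_len_1[of nu] by auto
  then have nu_eq: "nu = butlast nu @ [1]" by (metis append_butlast_last_id last_conv_nth)
  then show lam: "is_partition (butlast nu)" using nu by (metis is_partition_def sorted_wrt_append in_set_butlastD)
  show "add_box (butlast nu) 1 = nu"
    using nu_eq lam col_len_1[of "butlast nu"] by (simp add: add_box_def Let_def is_partition_def)
qed

lemma corner_imp_add_box_list_update:
  assumes nu: "is_partition nu" and "corner nu s" "s \<noteq> 1"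
  defines "lam \<equiv> nu[col_len nu s - 1 := s - 1]"
  shows "is_partition lam" "addable lam s" "add_box lam s = nu"
proof -
  have sorted: "sorted_wrt (\<ge>) nu" and nz: "0 \<notin> set nu" using nu by (auto simp: is_partition_def)
  have s2: "2 \<le> s" using \<open>corner nu s\<close> \<open>s \<noteq> 1\<close> by (auto simp: corner_def)
  define r where "r = col_len nu s - 1"
  have rl: "r < length nu" and nth: "nu ! r = s" using corner_nth[OF nu \<open>corner nu s\<close>] by (auto simp: r_def)
  have "sorted_wrt (\<ge>) lam" unfolding lam_def r_def[symmetric]
  proof (rule sorted_wrt_ge_list_update[OF sorted])
    show "s - 1 \<le> nu ! j" if "j < r" for j
    proof -
      have "nu ! r \<le> nu ! j" using sorted that rl by (simp add: sorted_wrt_iff_nth_less)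
      then show ?thesis using nth by simp
    qed
    show "nu ! j \<le> s - 1" if "r < j" "j < length nu" for j
    proof -
      have "r < col_len nu s" using rl nth s2 \<open>corner nu s\<close> by (simp add: r_def corner_def)
      then have "\<not> s \<le> nu ! j" using le_nth_iff_less_col_len[OF sorted that(2), of s] that by (simp add: r_def)
      then show ?thesis by simp
    qed
  qed
  moreover have "0 \<notin> set lam"
    unfolding lam_def using set_update_subset_insert[of nu "col_len nu s - 1" "s - 1"] nz s2 by auto
  ultimately show lam: "is_partition lam" by (simp add: is_partition_def)
  have col_lam: "col_len lam t + (if t = s then 1 else 0) = col_len nu t" if "1 \<le> t" for t
  proof -
    have "col_len lam t + (if t \<le> s then 1 else 0) = col_len nu t + (if t \<le> s - 1 then 1 else 0)"
      using col_len_list_update[OF rl, of "s - 1" t] nth unfolding lam_def r_def by simp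
    moreover have "t = s \<or> (t \<le> s \<longleftrightarrow> t \<le> s - 1)" by auto
    ultimately show ?thesis using that s2 by auto
  qed
  have "1 \<le> s - 1" "s - 1 \<noteq> s" using s2 by auto
  then have "col_len lam (s - 1) = col_len nu (s - 1)" using col_lam[of "s - 1"] by simp
  then show add: "addable lam s"
    using col_lam[of s] col_len_antimono[of "s - 1" s nu] s2 by (simp add: addable_def)
  show "add_box lam s = nu"
  proof (rule partition_eqI[OF is_partition_add_box[OF lam add] nu])
    fix t :: nat assume "1 \<le> t"
    then show "col_len (add_box lam s) t = col_len nu t"
      using col_len_add_box[OF lam add \<open>1 \<le> t\<close>] col_lam[OF \<open>1 \<le> t\<close>] by simp
  qed
qed

lemma corner_imp_ex_add_box:
  assumes "is_partition nu" "corner nu s"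
  shows "\<exists>lam. is_partition lam \<and> addable lam s \<and> add_box lam s = nu"
proof (cases "s = 1")
  case True
  then show ?thesis
    using corner_1_imp_add_box_butlast assms by (intro exI[of _ "butlast nu"]) (auto simp: addable_def)
next
  case False
  then show ?thesis using corner_imp_add_box_list_update[OF assms] by blast
qed

section \<open>The weight of a partition\<close>

lemma power_int_neg_nat: "(q :: real) powi (- int j) = 1 / q ^ j"
  by (simp add: power_int_minus divide_inverse)

lemma qpoch_inv_0 [simp]: "qpoch_inv q 0 = 1"
  by (simp add: qpoch_inv_def)

lemma qpoch_inv_Suc: "qpoch_inv q (Suc m) = qpoch_inv q m * (1 - 1 / q ^ Suc m)"
  unfolding qpoch_inv_def by (simp add: prod.cl_ivl_Suc power_int_neg_nat del: of_nat_Suc)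

lemma qpoch_inv_pos: "(q :: real) > 1 \<Longrightarrow> qpoch_inv q m > 0"
proof (induction m)
  case (Suc m)
  have "1 < q ^ Suc m" using Suc.prems by (rule one_less_power) simp
  with Suc show ?case by (simp add: qpoch_inv_Suc)
qed simp

definition aut_weight :: "real \<Rightarrow> nat list \<Rightarrow> real" where
  "aut_weight q lam =
     (\<Prod>i\<in>{1..first_part lam}. q ^ ((col_len lam i)\<^sup>2) * qpoch_inv q (count_list lam i))"

lemma aut_weight_pos: "(q :: real) > 1 \<Longrightarrow> aut_weight q lam > 0"
  unfolding aut_weight_def by (intro prod_pos) (simp add: qpoch_inv_pos)

lemma aut_weight_Nil: "aut_weight q [] = 1"
  by (simp add: aut_weight_def first_part_def)

text \<open>Since \<^term>\<open>count_list lam i\<close> is \<open>\<lambda>'\<^sub>i - \<lambda>'\<^sub>i\<^sub>+\<^sub>1\<close>, each factor of \<^const>\<open>aut_weight\<close> depends on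
  two consecutive column lengths only; adding a box to column \<open>s\<close> changes the factors at
  \<open>s - 1\<close> and \<open>s\<close>.\<close>

definition col_factor :: "real \<Rightarrow> (nat \<Rightarrow> nat) \<Rightarrow> nat \<Rightarrow> real" where
  "col_factor q c i = q ^ ((c i)\<^sup>2) * qpoch_inv q (c i - c (Suc i))"

lemma aut_weight_eq_prod_col_factor:
  assumes "first_part lam \<le> L"
  shows "aut_weight q lam = (\<Prod>i\<in>{1..L}. col_factor q (col_len lam) i)"
proof -
  have "aut_weight q lam = (\<Prod>i\<in>{1..first_part lam}. col_factor q (col_len lam) i)"
    unfolding aut_weight_def col_factor_def
    by (intro prod.cong refl) (metis col_len_eq_Suc_plus_count diff_add_inverse)
  also have "\<dots> = (\<Prod>i\<in>{1..L}. col_factor q (col_len lam) i)"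
    by (rule prod.mono_neutral_left) (use assms in \<open>auto simp: col_factor_def col_len_beyond_first_part\<close>)
  finally show ?thesis .
qed

lemma col_factor_pos: "(q :: real) > 1 \<Longrightarrow> col_factor q c i > 0"
  by (simp add: col_factor_def qpoch_inv_pos)

lemma col_factor_cong: "c' i = c i \<Longrightarrow> c' (Suc i) = c (Suc i) \<Longrightarrow> col_factor q c' i = col_factor q c i"
  by (simp add: col_factor_def)

lemma col_factor_incr:
  assumes "c' i = Suc (c i)" "c' (Suc i) = c (Suc i)" "c (Suc i) \<le> c i"
  shows "col_factor q c' i = col_factor q c i * (q ^ (2 * c i + 1) * (1 - 1 / q ^ Suc (c i - c (Suc i))))"
proof -
  have "(Suc (c i))\<^sup>2 = (c i)\<^sup>2 + (2 * c i + 1)" by (simp add: power2_eq_square)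
  with assms show ?thesis by (simp add: col_factor_def power_add qpoch_inv_Suc Suc_diff_le mult_ac)
qed

lemma col_factor_incr_next:
  assumes "c' i = c i" "c' (Suc i) = Suc (c (Suc i))" "c (Suc i) < c i"
  shows "col_factor q c i = col_factor q c' i * (1 - 1 / q ^ (c i - c (Suc i)))"
proof -
  have "c i - c (Suc i) = Suc (c' i - c' (Suc i))" using assms by simp
  with assms show ?thesis by (simp add: col_factor_def qpoch_inv_Suc mult_ac)
qed

lemma prod_swap_subset:
  fixes f g :: "'a \<Rightarrow> 'b :: comm_monoid_mult"
  assumes "finite A" "B \<subseteq> A" "\<And>i. i \<in> A - B \<Longrightarrow> f i = g i"
  shows "prod f A * prod g B = prod g A * prod f B"
  using assms prod.subset_diff[OF assms(2,1), of f] prod.subset_diff[OF assms(2,1), of g]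
    prod.cong[OF refl assms(3), of "A - B"] by (simp add: mult_ac)

lemma first_part_add_box_le:
  assumes "is_partition lam" "addable lam s"
  shows "first_part (add_box lam s) \<le> Suc (first_part lam)"
proof -
  have "col_len (add_box lam s) (Suc (Suc (first_part lam))) = 0"
    using col_len_add_box[OF assms, of "Suc (Suc (first_part lam))"] addable_le_Suc_first_part[OF assms(2)]
      col_len_beyond_first_part[of lam "Suc (Suc (first_part lam))"] by simp
  then show ?thesis using col_len_pos_iff[of "Suc (Suc (first_part lam))" "add_box lam s"] by simp
qed

lemma aut_weight_add_box:
  assumes q: "q > 1" and lam: "is_partition lam" and add: "addable lam s"
  defines "c \<equiv> col_len lam"
  shows "aut_weight q (add_box lam s) * (if s = 1 then 1 else 1 - 1 / q ^ (c (s - 1) - c s))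
       = aut_weight q lam * q ^ (2 * c s + 1) * (1 - 1 / q ^ Suc (c s - c (Suc s)))"
proof -
  define c' where "c' = col_len (add_box lam s)"
  define L where "L = Suc (first_part lam)"
  define B where "B = (if s = 1 then {s} else {s - 1, s})"
  define X where "X = q ^ (2 * c s + 1) * (1 - 1 / q ^ Suc (c s - c (Suc s)))"
  have s1: "1 \<le> s" using add by (simp add: addable_def)
  have c': "c' t = c t + (if t = s then 1 else 0)" if "1 \<le> t" for t
    using col_len_add_box[OF lam add that] by (simp add: c_def c'_def)
  have aut: "aut_weight q lam = (\<Prod>i\<in>{1..L}. col_factor q c i)"
    using aut_weight_eq_prod_col_factor[of lam L] by (simp add: L_def c_def)
  have aut': "aut_weight q (add_box lam s) = (\<Prod>i\<in>{1..L}. col_factor q c' i)"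
    unfolding c'_def L_def by (rule aut_weight_eq_prod_col_factor[OF first_part_add_box_le[OF lam add]])
  have swap: "(\<Prod>i\<in>{1..L}. col_factor q c' i) * prod (col_factor q c) B
      = (\<Prod>i\<in>{1..L}. col_factor q c i) * prod (col_factor q c') B"
    by (rule prod_swap_subset)
      (use s1 addable_le_Suc_first_part[OF add] in \<open>auto simp: B_def L_def c' intro!: col_factor_cong split: if_splits\<close>)
  have incr: "col_factor q c' s = col_factor q c s * X"
    unfolding X_def using c'[of s] c'[of "Suc s"] s1 col_len_antimono[of s "Suc s" lam]
    by (intro col_factor_incr) (auto simp: c_def)
  have incr_next: "col_factor q c (s - 1) = col_factor q c' (s - 1) * (1 - 1 / q ^ (c (s - 1) - c s))"
    if "s \<noteq> 1"
  proof -
    obtain i where i: "s = Suc i" "1 \<le> i" using \<open>s \<noteq> 1\<close> s1 by (cases s) auto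
    show ?thesis unfolding i diff_Suc_1 using c'[of i] c'[of "Suc i"] i add
      by (intro col_factor_incr_next) (auto simp: addable_def c_def)
  qed
  have pos: "col_factor q c s > 0" "col_factor q c' (s - 1) > 0"
    using col_factor_pos[OF q] by auto
  show ?thesis
  proof (cases "s = 1")
    case True
    then have "aut_weight q (add_box lam s) * col_factor q c s = aut_weight q lam * X * col_factor q c s"
      using swap incr aut aut' by (simp add: B_def mult_ac)
    with True pos show ?thesis by (simp add: X_def)
  next
    case False
    then have "(aut_weight q (add_box lam s) * (1 - 1 / q ^ (c (s - 1) - c s))) *
        (col_factor q c' (s - 1) * col_factor q c s)
      = (aut_weight q lam * X) * (col_factor q c' (s - 1) * col_factor q c s)"
      using swap incr incr_next aut aut' s1 by (simp add: B_def mult_ac)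
    with False pos show ?thesis by (simp add: X_def)
  qed
qed

lemma step3_prob_eq:
  fixes lam :: "nat list"
  assumes "(q :: real) \<noteq> 0" "1 \<le> s"
  defines "c \<equiv> col_len lam"
  shows "step3_prob q lam s = (if s = 1 then 1 else 1 - 1 / q ^ (c (s - 1) - c s)) / q ^ c s"
proof (cases "s = 1")
  case False
  have "c s \<le> c (s - 1)" unfolding c_def by (rule col_len_antimono) simp
  then obtain e where "c (s - 1) = c s + e" using le_Suc_ex by blast
  moreover have "step3_prob q lam s = 1 / q ^ c s - 1 / q ^ c (s - 1)"
    using False by (simp add: step3_prob_def power_int_neg_nat c_def)
  ultimately show ?thesis using False assms(1) by (simp add: power_add field_simps)
qed (simp add: step3_prob_def power_int_neg_nat c_def)

lemma step3_prob_aut_weight_add_box: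
  assumes q: "q > 1" and lam: "is_partition lam" and add: "addable lam s"
  shows "step3_prob q lam s * aut_weight q (add_box lam s)
       = (q ^ Suc (col_len lam s) - q ^ col_len lam (Suc s)) * aut_weight q lam"
proof -
  have s1: "1 \<le> s" using add by (simp add: addable_def)
  have "step3_prob q lam s * aut_weight q (add_box lam s)
      = aut_weight q lam * (q ^ (2 * col_len lam s + 1) *
          (1 - 1 / q ^ Suc (col_len lam s - col_len lam (Suc s))) / q ^ col_len lam s)"
    using aut_weight_add_box[OF q lam add] step3_prob_eq[of q s lam] q s1 by (simp add: mult_ac)
  also have "\<dots> = aut_weight q lam * (q ^ Suc (col_len lam s) - q ^ col_len lam (Suc s))"
  proof -
    obtain d where d: "col_len lam s = col_len lam (Suc s) + d"
      using col_len_antimono[of s "Suc s" lam] le_Suc_ex by auto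
    have "q ^ (2 * col_len lam s + 1) = q ^ Suc (col_len lam s) * q ^ d * q ^ col_len lam (Suc s)"
      unfolding d by (simp add: power_add mult_2)
    then show ?thesis using q unfolding d by (simp add: field_simps power_add)
  qed
  finally show ?thesis by (simp add: mult_ac)
qed

section \<open>Regrouping by the added box\<close>

definition qpoch :: "real \<Rightarrow> real \<Rightarrow> nat \<Rightarrow> real" where
  "qpoch q x m = (\<Prod>i<m. 1 - x * q ^ i)"

lemma qpoch_0 [simp]: "qpoch q x 0 = 1"
  by (simp add: qpoch_def)

lemma qpoch_Suc: "qpoch q x (Suc m) = qpoch q x m * (1 - x * q ^ m)"
  by (simp add: qpoch_def)

text \<open>For \<open>x = 1/q\<^sup>N\<close> this is \<open>1 - x\<close> times the Step 2 probability of column \<open>s\<close>; for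
  \<open>x = 0\<close> it is the Step 3 probability.\<close>

definition box_weight :: "real \<Rightarrow> real \<Rightarrow> nat list \<Rightarrow> nat \<Rightarrow> real" where
  "box_weight q x lam s = step3_prob q lam s - (if s = 1 then x else 0)"

definition corner_weight :: "real \<Rightarrow> real \<Rightarrow> nat list \<Rightarrow> nat \<Rightarrow> real" where
  "corner_weight q x nu s =
     qpoch q x (col_len nu 1) * (q ^ col_len nu s - q ^ col_len nu (Suc s)) / aut_weight q nu"

lemma box_weight_not_addable:
  "1 \<le> s \<Longrightarrow> \<not> addable lam s \<Longrightarrow> box_weight q x lam s = 0"
  using not_addable_imp_col_len_eq[of s lam] by (simp add: box_weight_def step3_prob_def)

lemma corner_weight_not_corner: "\<not> corner nu s \<Longrightarrow> 1 \<le> s \<Longrightarrow> corner_weight q x nu s = 0"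
  using col_len_antimono[of s "Suc s" nu] by (simp add: corner_weight_def corner_def)

lemma box_weight_eq_corner_weight:
  assumes q: "q > 1" and lam: "is_partition lam" and add: "addable lam s"
  shows "qpoch q x (col_len lam 1) / aut_weight q lam * box_weight q x lam s
       = corner_weight q x (add_box lam s) s"
proof -
  have s1: "1 \<le> s" using add by (simp add: addable_def)
  have aut: "aut_weight q lam > 0" "aut_weight q (add_box lam s) > 0"
    using aut_weight_pos[OF q] by auto
  have "step3_prob q lam s / aut_weight q lam
      = (q ^ col_len (add_box lam s) s - q ^ col_len (add_box lam s) (Suc s)) / aut_weight q (add_box lam s)"
    using step3_prob_aut_weight_add_box[OF q lam add] aut col_len_add_box[OF lam add] s1
    by (simp add: field_simps)
  moreover have "qpoch q x (col_len lam 1) * box_weight q x lam s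
      = qpoch q x (col_len (add_box lam s) 1) * step3_prob q lam s"
  proof (cases "s = 1")
    case True
    have "step3_prob q lam 1 * q ^ col_len lam 1 = 1"
      using q by (simp add: step3_prob_def power_int_neg_nat)
    then have "box_weight q x lam s = step3_prob q lam s * (1 - x * q ^ col_len lam 1)"
      using True by (simp add: box_weight_def algebra_simps)
    then show ?thesis using True col_len_add_box[OF lam add, of 1] by (simp add: qpoch_Suc mult_ac)
  next
    case False
    then show ?thesis using col_len_add_box[OF lam add, of 1] by (simp add: box_weight_def)
  qed
  ultimately show ?thesis unfolding corner_weight_def by (metis times_divide_eq_left times_divide_eq_right mult.commute)
qed

lemma sum_corner_weight:
  assumes "nu \<noteq> []" "is_partition nu"
  shows "(\<Sum>s\<in>{1..first_part nu}. corner_weight q x nu s)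
       = qpoch q x (col_len nu 1) * (q ^ col_len nu 1 - 1) / aut_weight q nu"
proof -
  have "0 < col_len nu 1" using assms col_len_1[of nu] by (simp add: is_partition_def)
  then have "1 \<le> first_part nu" using col_len_pos_iff[of 1 nu] by simp
  then have "(\<Sum>s\<in>{1..first_part nu}. q ^ col_len nu s - q ^ col_len nu (Suc s))
      = q ^ col_len nu 1 - q ^ col_len nu (Suc (first_part nu))"
    using sum_Suc_diff[of 1 "first_part nu" "\<lambda>s. - (q ^ col_len nu s)"] by simp
  also have "col_len nu (Suc (first_part nu)) = 0" by (rule col_len_beyond_first_part) simp
  finally show ?thesis
    by (simp add: corner_weight_def sum_divide_distrib[symmetric] sum_distrib_left[symmetric])
qed

lemma bij_betw_add_box:
  "bij_betw (\<lambda>(lam, s). (add_box lam s, s))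
     {(lam, s). lam \<in> partitions_of j \<and> addable lam s}
     {(nu, s). nu \<in> partitions_of (Suc j) \<and> corner nu s}"
proof (rule bij_betw_imageI)
  show "inj_on (\<lambda>(lam, s). (add_box lam s, s)) {(lam, s). lam \<in> partitions_of j \<and> addable lam s}"
    by (rule inj_onI) (auto simp: mem_partitions_of_iff intro: add_box_inj)
  show "(\<lambda>(lam, s). (add_box lam s, s)) ` {(lam, s). lam \<in> partitions_of j \<and> addable lam s}
      = {(nu, s). nu \<in> partitions_of (Suc j) \<and> corner nu s}"
  proof (intro equalityI subsetI)
    fix p assume "p \<in> (\<lambda>(lam, s). (add_box lam s, s)) ` {(lam, s). lam \<in> partitions_of j \<and> addable lam s}"
    then show "p \<in> {(nu, s). nu \<in> partitions_of (Suc j) \<and> corner nu s}"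
      by (auto simp: mem_partitions_of_iff is_partition_add_box sum_list_add_box corner_add_box)
  next
    fix p assume "p \<in> {(nu, s). nu \<in> partitions_of (Suc j) \<and> corner nu s}"
    then obtain nu s where p: "p = (nu, s)" "is_partition nu" "sum_list nu = Suc j" "corner nu s"
      by (auto simp: mem_partitions_of_iff)
    then obtain lam where lam: "is_partition lam" "addable lam s" "add_box lam s = nu"
      using corner_imp_ex_add_box by blast
    then have "sum_list lam = j" using sum_list_add_box[OF lam(1,2)] p(3) by simp
    with lam p show "p \<in> (\<lambda>(lam, s). (add_box lam s, s)) ` {(lam, s). lam \<in> partitions_of j \<and> addable lam s}"
      by (auto simp: mem_partitions_of_iff image_iff)
  qed
qed

lemma sum_nested_eq_sum_pairs:
  assumes "finite A" "\<And>a. a \<in> A \<Longrightarrow> finite (B a)"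
    and "\<And>a b. a \<in> A \<Longrightarrow> P a b \<Longrightarrow> b \<in> B a"
    and "\<And>a b. a \<in> A \<Longrightarrow> b \<in> B a \<Longrightarrow> \<not> P a b \<Longrightarrow> F a b = 0"
  shows "(\<Sum>a\<in>A. \<Sum>b\<in>B a. F a b) = (\<Sum>(a, b)\<in>{(a, b). a \<in> A \<and> P a b}. F a b)"
proof -
  have "(\<Sum>a\<in>A. \<Sum>b\<in>B a. F a b) = (\<Sum>(a, b)\<in>Sigma A B. F a b)"
    by (rule sum.Sigma) (use assms in auto)
  also have "\<dots> = (\<Sum>(a, b)\<in>{(a, b). a \<in> A \<and> P a b}. F a b)"
    by (rule sum.mono_neutral_right) (use assms in force)+
  finally show ?thesis .
qed

lemma sum_add_box_regroup:
  assumes q: "q > 1"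
  shows "(\<Sum>lam\<in>partitions_of j. \<Sum>s\<in>{1..Suc (first_part lam)}.
            qpoch q x (col_len lam 1) / aut_weight q lam * box_weight q x lam s * H (add_box lam s))
       = (\<Sum>nu\<in>partitions_of (Suc j). qpoch q x (col_len nu 1) * (q ^ col_len nu 1 - 1) / aut_weight q nu * H nu)"
proof -
  have "(\<Sum>lam\<in>partitions_of j. \<Sum>s\<in>{1..Suc (first_part lam)}.
            qpoch q x (col_len lam 1) / aut_weight q lam * box_weight q x lam s * H (add_box lam s))
      = (\<Sum>(lam, s)\<in>{(lam, s). lam \<in> partitions_of j \<and> addable lam s}.
            qpoch q x (col_len lam 1) / aut_weight q lam * box_weight q x lam s * H (add_box lam s))"
    by (rule sum_nested_eq_sum_pairs)
      (auto simp: finite_partitions_of box_weight_not_addable addable_le_Suc_first_part addable_def)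
  also have "\<dots> = (\<Sum>(lam, s)\<in>{(lam, s). lam \<in> partitions_of j \<and> addable lam s}.
            corner_weight q x (add_box lam s) s * H (add_box lam s))"
    by (rule sum.cong) (auto simp: mem_partitions_of_iff box_weight_eq_corner_weight[OF q, symmetric])
  also have "\<dots> = (\<Sum>(nu, s)\<in>{(nu, s). nu \<in> partitions_of (Suc j) \<and> corner nu s}. corner_weight q x nu s * H nu)"
    using sum.reindex_bij_betw[OF bij_betw_add_box, of "\<lambda>(nu, s). corner_weight q x nu s * H nu"]
    by (simp add: case_prod_beta)
  also have "\<dots> = (\<Sum>nu\<in>partitions_of (Suc j). \<Sum>s\<in>{1..first_part nu}. corner_weight q x nu s * H nu)"
    by (rule sum_nested_eq_sum_pairs[symmetric])
      (auto simp: finite_partitions_of corner_weight_not_corner corner_le_first_part corner_def)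
  also have "\<dots> = (\<Sum>nu\<in>partitions_of (Suc j). qpoch q x (col_len nu 1) * (q ^ col_len nu 1 - 1) / aut_weight q nu * H nu)"
  proof (rule sum.cong[OF refl])
    fix nu assume "nu \<in> partitions_of (Suc j)"
    then have "nu \<noteq> []" "is_partition nu" by (auto simp: mem_partitions_of_iff)
    then show "(\<Sum>s\<in>{1..first_part nu}. corner_weight q x nu s * H nu)
        = qpoch q x (col_len nu 1) * (q ^ col_len nu 1 - 1) / aut_weight q nu * H nu"
      using sum_corner_weight[of nu q x] by (simp add: sum_distrib_right[symmetric])
  qed
  finally show ?thesis .
qed

section \<open>The procedure\<close>

text \<open>\<open>\<lambda>'\<^sub>1 \<le> N\<close> is what makes the Step 2 probabilities nonnegative; the procedure started at
  \<open>N = 1\<close> with the empty partition only visits such states.\<close>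

definition valid_state :: "nat \<Rightarrow> nat list \<Rightarrow> bool" where
  "valid_state N lam \<longleftrightarrow> is_partition lam \<and> 1 \<le> N \<and> col_len lam 1 \<le> N"

lemma valid_state_mono: "valid_state N lam \<Longrightarrow> N \<le> N' \<Longrightarrow> valid_state N' lam"
  by (auto simp: valid_state_def)

lemma step2_prob_eq_box_weight:
  assumes q: "q > 1" and N: "1 \<le> N"
  shows "step2_prob q N lam s = box_weight q (1 / q ^ N) lam s / (1 - 1 / q ^ N)"
proof -
  have Q: "q ^ N > 1" using q N by simp
  have rescale: "(q ^ N / a - q ^ N / b) / (q ^ N - 1) = (1 / a - 1 / b) / (1 - 1 / q ^ N)" for a b :: real
    using Q q by (simp add: field_simps)
  show ?thesis
  proof (cases "s = 1")
    case True
    then have "step2_prob q N lam s = (q ^ N / q ^ col_len lam 1 - q ^ N / q ^ N) / (q ^ N - 1)"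
      using q by (simp add: step2_prob_def power_int_diff)
    with True show ?thesis unfolding rescale by (simp add: box_weight_def step3_prob_def power_int_neg_nat)
  next
    case False
    then have "step2_prob q N lam s
        = (q ^ N / q ^ col_len lam s - q ^ N / q ^ col_len lam (s - 1)) / (q ^ N - 1)"
      using q by (simp add: step2_prob_def power_int_diff)
    with False show ?thesis unfolding rescale by (simp add: box_weight_def step3_prob_def power_int_neg_nat)
  qed
qed

lemma step3_prob_nonneg: "(q :: real) > 1 \<Longrightarrow> 1 \<le> s \<Longrightarrow> step3_prob q lam s \<ge> 0"
  using col_len_antimono[of "s - 1" s lam]
  by (auto simp: step3_prob_def power_int_neg_nat frac_le power_increasing)

lemma sum_step3_prob_upto: "(\<Sum>s\<in>{1..Suc m}. step3_prob q lam s) = 1 / q ^ col_len lam (Suc m)"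
proof (induction m)
  case (Suc m)
  have "{1..Suc (Suc m)} = insert (Suc (Suc m)) {1..Suc m}" by auto
  with Suc show ?case by (simp add: step3_prob_def power_int_neg_nat)
qed (simp add: step3_prob_def power_int_neg_nat)

lemma sum_step3_prob: "(\<Sum>s\<in>{1..Suc (first_part lam)}. step3_prob q lam s) = 1"
proof -
  have "col_len lam (Suc (first_part lam)) = 0" by (rule col_len_beyond_first_part) simp
  then show ?thesis using sum_step3_prob_upto[of q lam "first_part lam"] by (simp only: power_0 div_by_1)
qed

lemma step2_prob_nonneg:
  assumes q: "q > 1" and v: "valid_state N lam" and s: "1 \<le> s"
  shows "step2_prob q N lam s \<ge> 0"
proof -
  have N: "1 \<le> N" "col_len lam 1 \<le> N" using v by (auto simp: valid_state_def)
  have "1 / q ^ N \<le> 1 / q ^ col_len lam 1" using q N(2) by (simp add: frac_le power_increasing)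
  then have "box_weight q (1 / q ^ N) lam s \<ge> 0"
    using step3_prob_nonneg[OF q s] by (auto simp: box_weight_def step3_prob_def power_int_neg_nat)
  then show ?thesis using q N(1) by (simp add: step2_prob_eq_box_weight)
qed

lemma sum_step2_prob:
  assumes q: "q > 1" and N: "1 \<le> N"
  shows "(\<Sum>s\<in>{1..Suc (first_part lam)}. step2_prob q N lam s) = 1"
proof -
  have "(\<Sum>s\<in>{1..Suc (first_part lam)}. box_weight q (1 / q ^ N) lam s) = 1 - 1 / q ^ N"
    unfolding box_weight_def sum_subtractf sum_step3_prob by simp
  moreover have "1 - 1 / q ^ N \<noteq> 0" using one_less_power[OF q, of N] N by simp
  ultimately show ?thesis using q N by (simp add: step2_prob_eq_box_weight sum_divide_distrib[symmetric])
qed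

lemma step2_prob_nonzero_imp:
  assumes v: "valid_state N lam" and s: "1 \<le> s" and nz: "step2_prob q N lam s \<noteq> 0"
  shows "addable lam s" "valid_state N (add_box lam s)"
proof -
  have lam: "is_partition lam" and N: "1 \<le> N" "col_len lam 1 \<le> N"
    using v by (auto simp: valid_state_def)
  show add: "addable lam s"
  proof (rule ccontr)
    assume "\<not> addable lam s"
    then have "s \<noteq> 1" "col_len lam s = col_len lam (s - 1)"
      using not_addable_imp_col_len_eq[OF s] by auto
    then show False using nz by (simp add: step2_prob_def)
  qed
  have "col_len lam 1 \<noteq> N" if "s = 1"
    using nz that by (auto simp: step2_prob_def)
  then have "col_len (add_box lam s) 1 \<le> N"
    using col_len_add_box[OF lam add, of 1] N by auto
  then show "valid_state N (add_box lam s)"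
    using is_partition_add_box[OF lam add] N by (simp add: valid_state_def)
qed

lemma inverse_power_Suc_bounds: "(q :: real) > 1 \<Longrightarrow> 0 \<le> 1 / q ^ Suc r \<and> 1 / q ^ Suc r < 1"
  by (simp del: power_Suc)

lemma geometric_prob_sums: "0 \<le> t \<Longrightarrow> t < (1 :: real) \<Longrightarrow> (\<lambda>k. t ^ k * (1 - t)) sums 1"
  using sums_mult2[OF geometric_sums[of t], of "1 - t"] by simp

lemma convex_sum_bounds:
  fixes w f :: "'a \<Rightarrow> real"
  assumes "finite A" "sum w A = 1" "\<And>a. a \<in> A \<Longrightarrow> 0 \<le> w a"
    and "\<And>a. a \<in> A \<Longrightarrow> w a \<noteq> 0 \<Longrightarrow> 0 \<le> f a \<and> f a \<le> 1"
  shows "0 \<le> (\<Sum>a\<in>A. w a * f a) \<and> (\<Sum>a\<in>A. w a * f a) \<le> 1"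
proof -
  have "0 \<le> w a * f a \<and> w a * f a \<le> w a" if "a \<in> A" for a
    using assms(3,4)[OF that] by (cases "w a = 0") (auto simp: mult_left_le)
  then show ?thesis
    using sum_nonneg[of A "\<lambda>a. w a * f a"] sum_mono[of A "\<lambda>a. w a * f a" w] assms(2) by auto
qed

lemma convex_series_bounds:
  fixes w f :: "nat \<Rightarrow> real"
  assumes "w sums 1" "\<And>k. 0 \<le> w k" "\<And>k. 0 \<le> f k \<and> f k \<le> 1"
  shows "summable (\<lambda>k. w k * f k)" "0 \<le> (\<Sum>k. w k * f k)" "(\<Sum>k. w k * f k) \<le> 1"
proof -
  have bnd: "0 \<le> w k * f k \<and> w k * f k \<le> w k" for k
    using assms(2,3)[of k] by (auto simp: mult_left_le)
  then show sm: "summable (\<lambda>k. w k * f k)"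
    using summable_comparison_test'[of w 0 "\<lambda>k. w k * f k"] assms(1) sums_summable by auto
  show "0 \<le> (\<Sum>k. w k * f k)" using bnd sm by (simp add: suminf_nonneg)
  show "(\<Sum>k. w k * f k) \<le> 1"
    using suminf_le[of "\<lambda>k. w k * f k" w] bnd sm assms(1) sums_summable sums_unique by fastforce
qed

definition after_head :: "real \<Rightarrow> nat \<Rightarrow> nat \<Rightarrow> nat list \<Rightarrow> nat list \<Rightarrow> real" where
  "after_head q r N lam mu =
     (\<Sum>s\<in>{1..Suc (first_part lam)}. step2_prob q N lam s * proc_prob q r N (add_box lam s) mu)"

lemma proc_prob_Suc:
  "proc_prob q (Suc r) N lam mu
     = (\<Sum>k. (1 / q ^ Suc r) ^ k * (1 - 1 / q ^ Suc r) * after_head q r (N + k) lam mu)"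
  unfolding after_head_def by (simp only: proc_prob.simps power_int_neg_nat)

lemma after_head_bounds:
  assumes q: "q > 1" and v: "valid_state N lam"
    and IH: "\<And>N' lam'. valid_state N' lam' \<Longrightarrow> 0 \<le> proc_prob q r N' lam' mu \<and> proc_prob q r N' lam' mu \<le> 1"
  shows "0 \<le> after_head q r N lam mu \<and> after_head q r N lam mu \<le> 1"
  unfolding after_head_def
proof (rule convex_sum_bounds)
  show "(\<Sum>s\<in>{1..Suc (first_part lam)}. step2_prob q N lam s) = 1"
    using v by (intro sum_step2_prob[OF q]) (simp add: valid_state_def)
qed (use step2_prob_nonneg[OF q v] IH step2_prob_nonzero_imp(2)[OF v] in auto)

lemma proc_prob_bounds:
  assumes q: "q > 1"
  shows "valid_state N lam \<Longrightarrow> 0 \<le> proc_prob q r N lam mu \<and> proc_prob q r N lam mu \<le> 1"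
proof (induction r arbitrary: N lam)
  case 0
  show ?case unfolding proc_prob.simps
    by (rule convex_sum_bounds) (use sum_step3_prob step3_prob_nonneg[OF q] in auto)
next
  case (Suc r)
  define t where "t = 1 / q ^ Suc r"
  have t: "0 \<le> t" "t < 1" using inverse_power_Suc_bounds[OF q] by (auto simp: t_def)
  have "0 \<le> after_head q r (N + k) lam mu \<and> after_head q r (N + k) lam mu \<le> 1" for k
    using Suc.prems by (intro after_head_bounds[OF q _ Suc.IH]) (auto simp: valid_state_def)
  then show ?case unfolding proc_prob_Suc t_def[symmetric]
    using convex_series_bounds(2,3)[OF geometric_prob_sums[OF t]] t by simp
qed

lemma summable_proc_prob_Suc:
  assumes q: "q > 1" and v: "valid_state N lam"
  shows "summable (\<lambda>k. (1 / q ^ Suc r) ^ k * (1 - 1 / q ^ Suc r) * after_head q r (N + k) lam mu)"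
proof -
  have t: "0 \<le> 1 / q ^ Suc r" "1 / q ^ Suc r < 1" using inverse_power_Suc_bounds[OF q] by auto
  have "0 \<le> after_head q r (N + k) lam mu \<and> after_head q r (N + k) lam mu \<le> 1" for k
    using v by (intro after_head_bounds[OF q _ proc_prob_bounds[OF q]]) (auto simp: valid_state_def)
  then show ?thesis using convex_series_bounds(1)[OF geometric_prob_sums[OF t]] t by simp
qed

lemma sum_proc_prob_0:
  assumes lam: "is_partition lam"
  shows "(\<Sum>mu\<in>partitions_of (sum_list lam + 1). proc_prob q 0 N lam mu) = 1"
proof -
  have "step3_prob q lam s * (\<Sum>mu\<in>partitions_of (sum_list lam + 1). if add_box lam s = mu then 1 else 0)
      = step3_prob q lam s" if "s \<in> {1..Suc (first_part lam)}" for s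
  proof (cases "addable lam s")
    case True
    then have "add_box lam s \<in> partitions_of (sum_list lam + 1)"
      using lam by (simp add: mem_partitions_of_iff is_partition_add_box sum_list_add_box)
    then show ?thesis by (simp add: finite_partitions_of)
  next
    case False
    with that have "step3_prob q lam s = 0"
      using box_weight_not_addable[of s lam q 0] by (simp add: box_weight_def)
    then show ?thesis by simp
  qed
  then have "(\<Sum>s\<in>{1..Suc (first_part lam)}. \<Sum>mu\<in>partitions_of (sum_list lam + 1).
      step3_prob q lam s * (if add_box lam s = mu then 1 else 0)) = 1"
    using sum_step3_prob[of q lam] by (simp add: sum_distrib_left)
  then show ?thesis unfolding proc_prob.simps by (subst sum.swap)
qed

lemma sum_after_head:
  assumes q: "q > 1" and v: "valid_state N lam"
    and IH: "\<And>N' lam'. valid_state N' lam' \<Longrightarrow>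
      (\<Sum>mu\<in>partitions_of (sum_list lam' + r + 1). proc_prob q r N' lam' mu) = 1"
  shows "(\<Sum>mu\<in>partitions_of (sum_list lam + Suc r + 1). after_head q r N lam mu) = 1"
proof -
  define P where "P = partitions_of (sum_list lam + Suc r + 1)"
  have inner: "step2_prob q N lam s * (\<Sum>mu\<in>P. proc_prob q r N (add_box lam s) mu)
      = step2_prob q N lam s" if "s \<in> {1..Suc (first_part lam)}" for s
  proof (cases "step2_prob q N lam s = 0")
    case False
    with that have "addable lam s" "valid_state N (add_box lam s)"
      using step2_prob_nonzero_imp[OF v] by auto
    moreover have "sum_list (add_box lam s) + r + 1 = sum_list lam + Suc r + 1"
      using v \<open>addable lam s\<close> by (simp add: valid_state_def sum_list_add_box)
    ultimately show ?thesis using IH[of N "add_box lam s"] unfolding P_def by simp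
  qed simp
  have "(\<Sum>mu\<in>P. after_head q r N lam mu) = (\<Sum>s\<in>{1..Suc (first_part lam)}. step2_prob q N lam s)"
    unfolding after_head_def
    by (subst sum.swap, rule sum.cong[OF refl]) (simp add: sum_distrib_left[symmetric] inner)
  also have "\<dots> = 1" using v by (intro sum_step2_prob[OF q]) (simp add: valid_state_def)
  finally show ?thesis unfolding P_def .
qed

lemma sum_proc_prob:
  assumes q: "q > 1"
  shows "valid_state N lam \<Longrightarrow> (\<Sum>mu\<in>partitions_of (sum_list lam + r + 1). proc_prob q r N lam mu) = 1"
proof (induction r arbitrary: N lam)
  case 0
  then show ?case using sum_proc_prob_0 by (simp add: valid_state_def)
next
  case (Suc r)
  define t where "t = 1 / q ^ Suc r"
  have t: "0 \<le> t" "t < 1" using inverse_power_Suc_bounds[OF q] by (auto simp: t_def)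
  define P where "P = partitions_of (sum_list lam + Suc r + 1)"
  have "(\<Sum>mu\<in>P. after_head q r (N + k) lam mu) = 1" for k
    unfolding P_def using Suc by (intro sum_after_head[OF q]) (auto elim: valid_state_mono)
  moreover have "summable (\<lambda>k. t ^ k * (1 - t) * after_head q r (N + k) lam mu)" for mu
    unfolding t_def by (rule summable_proc_prob_Suc[OF q Suc.prems])
  ultimately have "(\<Sum>mu\<in>P. proc_prob q (Suc r) N lam mu) = (\<Sum>k. t ^ k * (1 - t))"
    unfolding proc_prob_Suc t_def[symmetric]
    by (simp add: suminf_sum[symmetric] sum_distrib_left[symmetric])
  then show ?case using sums_unique[OF geometric_prob_sums[OF t]] by (simp add: P_def)
qed

section \<open>Summing out the tails\<close>

lemma sums_diagonal_nonneg:
  fixes f :: "nat \<Rightarrow> nat \<Rightarrow> real"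
  assumes nonneg: "\<And>M k. 0 \<le> f M k" and rows: "\<And>M. summable (f M)"
    and row_sums: "summable (\<lambda>M. \<Sum>k. f M k)"
  shows "(\<lambda>n. \<Sum>M\<le>n. f M (n - M)) sums (\<Sum>M. \<Sum>k. f M k)"
proof -
  have row: "(f M has_sum (\<Sum>k. f M k)) UNIV" for M
    using rows nonneg by (intro sums_nonneg_imp_has_sum) (auto simp: summable_sums)
  have col: "((\<lambda>M. \<Sum>k. f M k) has_sum (\<Sum>M. \<Sum>k. f M k)) UNIV"
    using row_sums rows nonneg by (intro sums_nonneg_imp_has_sum) (auto simp: summable_sums suminf_nonneg)
  have abs: "(\<lambda>p. norm ((\<lambda>(M, k). f M k) p)) summable_on UNIV \<times> UNIV"
  proof (rule iffD2[OF Infinite_Sum.abs_summable_on_Sigma_iff], intro conjI ballI)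
    fix M :: nat
    show "(\<lambda>k. norm ((\<lambda>(M, k). f M k) (M, k))) summable_on UNIV"
      using row[of M] nonneg by (auto simp: summable_on_def)
  next
    have eq: "(\<lambda>M. norm (\<Sum>\<^sub>\<infinity>k. norm ((\<lambda>(M, k). f M k) (M, k)))) = (\<lambda>M. \<Sum>k. f M k)"
      using infsumI[OF row] nonneg suminf_nonneg[OF rows] by (auto simp: fun_eq_iff)
    show "(\<lambda>M. norm (\<Sum>\<^sub>\<infinity>k. norm ((\<lambda>(M, k). f M k) (M, k)))) summable_on UNIV"
      unfolding eq summable_on_def using col by blast
  qed
  have joint: "((\<lambda>(M, k). f M k) has_sum (\<Sum>M. \<Sum>k. f M k)) (UNIV \<times> UNIV)"
    by (rule has_sum_SigmaI[OF _ col abs_summable_summable[OF abs]]) (simp add: row)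
  have bij: "bij_betw (\<lambda>(M :: nat, k). (M + k, M)) (UNIV \<times> UNIV) (SIGMA n:UNIV. {..n})"
    by (rule bij_betwI[where g = "\<lambda>(n, M). (M, n - M)"]) auto
  have "(\<lambda>x. (\<lambda>(n, M). f M (n - M)) ((\<lambda>(M, k). (M + k, M)) x)) = (\<lambda>(M, k). f M k)"
    by auto
  with joint have "((\<lambda>x. (\<lambda>(n, M). f M (n - M)) ((\<lambda>(M, k). (M + k, M)) x))
      has_sum (\<Sum>M. \<Sum>k. f M k)) (UNIV \<times> UNIV)" by simp
  then have "((\<lambda>(n, M). f M (n - M)) has_sum (\<Sum>M. \<Sum>k. f M k)) (SIGMA n:UNIV. {..n})"
    unfolding has_sum_reindex_bij_betw[OF bij] .
  then have "((\<lambda>n. \<Sum>M\<le>n. f M (n - M)) has_sum (\<Sum>M. \<Sum>k. f M k)) UNIV"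
    by (rule has_sum_Sigma') auto
  then show ?thesis by (rule has_sum_imp_sums)
qed

lemma qpoch_mult_q:
  "qpoch q (q * x) m * (1 - x) = qpoch q x m * (1 - x * q ^ m)"
proof (induction m)
  case (Suc m)
  have "qpoch q (q * x) (Suc m) * (1 - x) = qpoch q (q * x) m * (1 - x) * (1 - x * q ^ Suc m)"
    by (simp add: qpoch_Suc mult_ac)
  also have "\<dots> = qpoch q x (Suc m) * (1 - x * q ^ Suc m)"
    using Suc by (simp add: qpoch_Suc)
  finally show ?case .
qed simp

lemma qpoch_inverse_power_eq_0: "(q :: real) > 1 \<Longrightarrow> M < c \<Longrightarrow> qpoch q (1 / q ^ M) c = 0"
  unfolding qpoch_def by (rule prod_zero) (auto intro!: bexI[of _ M])

lemma qpoch_inverse_power_nonneg: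
  assumes q: "(q :: real) > 1"
  shows "qpoch q (1 / q ^ M) c \<ge> 0"
proof (cases "c \<le> M")
  case True
  have "1 / q ^ M * q ^ i \<le> 1" if "i < c" for i
    using that True q power_increasing[of i M q] by (simp add: field_simps)
  then show ?thesis unfolding qpoch_def by (intro prod_nonneg) auto
qed (use qpoch_inverse_power_eq_0[OF q] in simp)

definition qpoch_step :: "real \<Rightarrow> nat \<Rightarrow> nat \<Rightarrow> real" where
  "qpoch_step q M c = qpoch q (1 / q ^ Suc M) c - qpoch q (1 / q ^ M) c"

lemma qpoch_step_eq:
  assumes q: "q > 1"
  shows "qpoch q (1 / q ^ Suc M) c * (q ^ c - 1) / (1 - 1 / q ^ Suc M) = q ^ Suc M * qpoch_step q M c"
proof -
  define x where "x = 1 / q ^ Suc M"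
  have "q \<noteq> 0" using q by simp
  then have x: "x \<noteq> 0" "1 - x \<noteq> 0" using inverse_power_Suc_bounds[OF q, of M] by (auto simp: x_def)
  have qx: "q * x = 1 / q ^ M" using \<open>q \<noteq> 0\<close> by (simp add: x_def)
  have "qpoch q (1 / q ^ M) c = qpoch q x c * (1 - x * q ^ c) / (1 - x)"
    using qpoch_mult_q[of q x c] x unfolding qx by (simp add: field_simps)
  then show ?thesis using x unfolding qpoch_step_def x_def[symmetric] by (simp add: field_simps x_def)
qed

lemma qpoch_step_nonneg:
  assumes q: "(q :: real) > 1"
  shows "qpoch_step q M c \<ge> 0"
proof (cases "c \<le> M")
  case True
  have "qpoch q (1 / q ^ M) c \<le> qpoch q (1 / q ^ Suc M) c"
    unfolding qpoch_def
  proof (rule prod_mono)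
    fix i assume "i \<in> {..<c}"
    then have "q ^ i \<le> q ^ M" using True q by (intro power_increasing) auto
    moreover have "1 / q ^ Suc M * q ^ i \<le> 1 / q ^ M * q ^ i" using q
      by (intro mult_right_mono) (auto simp: frac_le simp del: power_Suc)
    ultimately show "0 \<le> 1 - 1 / q ^ M * q ^ i \<and> 1 - 1 / q ^ M * q ^ i \<le> 1 - 1 / q ^ Suc M * q ^ i"
      using q by (simp add: field_simps)
  qed
  then show ?thesis by (simp add: qpoch_step_def)
next
  case False
  then show ?thesis
    using qpoch_inverse_power_eq_0[OF q, of M c] qpoch_inverse_power_nonneg[OF q, of "Suc M" c]
    by (simp add: qpoch_step_def)
qed

lemma qpoch_step_nonzero_imp: "(q :: real) > 1 \<Longrightarrow> qpoch_step q M c \<noteq> 0 \<Longrightarrow> c \<le> Suc M"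
  using qpoch_inverse_power_eq_0[of q M c] qpoch_inverse_power_eq_0[of q "Suc M" c]
  by (force simp: qpoch_step_def)

lemma qpoch_1_eq_0: "1 \<le> c \<Longrightarrow> qpoch q 1 c = 0"
  unfolding qpoch_def by (rule prod_zero) (auto intro!: bexI[of _ 0])

lemma qpoch_step_sums:
  assumes q: "(q :: real) > 1" and c: "1 \<le> c"
  shows "(\<lambda>M. qpoch_step q M c) sums 1"
proof -
  have "(\<lambda>M. 1 / q ^ M) \<longlonglongrightarrow> 0"
    using LIMSEQ_power_zero[of "1 / q"] q by (simp add: power_one_over)
  then have "(\<lambda>M. qpoch q (1 / q ^ M) c) \<longlonglongrightarrow> qpoch q 0 c"
    unfolding qpoch_def by (intro tendsto_intros)
  then have "(\<lambda>M. qpoch_step q M c) sums (qpoch q 0 c - qpoch q (1 / q ^ 0) c)"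
    unfolding qpoch_step_def by (rule telescope_sums)
  moreover have "qpoch q 0 c = 1" by (simp add: qpoch_def)
  ultimately show ?thesis using qpoch_1_eq_0[OF c, of q] by simp
qed

lemma sum_qpoch_step_atMost:
  "1 \<le> c \<Longrightarrow> (\<Sum>M\<le>n. qpoch_step q M c) = qpoch q (1 / q ^ Suc n) c"
  using sum_lessThan_telescope[of "\<lambda>M. qpoch q (1 / q ^ M) c" "Suc n"] qpoch_1_eq_0[of c q]
  by (simp add: qpoch_step_def lessThan_Suc_atMost)

text \<open>With \<open>t = q\<^sup>-\<^sup>r\<close>, \<open>state_weight q t M lam\<close> is proportional to the probability that
  the counter has just become \<open>r\<close> with \<open>N = Suc M\<close> and partition \<open>lam\<close>.\<close>

definition state_weight :: "real \<Rightarrow> real \<Rightarrow> nat \<Rightarrow> nat list \<Rightarrow> real" where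
  "state_weight q t M lam = t ^ M * qpoch_step q M (col_len lam 1) / aut_weight q lam"

definition mixed_proc_prob :: "real \<Rightarrow> nat \<Rightarrow> nat \<Rightarrow> nat list \<Rightarrow> real" where
  "mixed_proc_prob q r j mu =
     (\<Sum>M. \<Sum>lam\<in>partitions_of j. state_weight q (1 / q ^ r) M lam * proc_prob q r (Suc M) lam mu)"

lemma state_weight_nonneg: "(q :: real) > 1 \<Longrightarrow> 0 \<le> t \<Longrightarrow> 0 \<le> state_weight q t M lam"
  using qpoch_step_nonneg[of q M "col_len lam 1"] aut_weight_pos[of q lam] by (simp add: state_weight_def)

lemma state_weight_le: "(q :: real) > 1 \<Longrightarrow> 0 \<le> t \<Longrightarrow> t \<le> 1 \<Longrightarrow>
    state_weight q t M lam \<le> qpoch_step q M (col_len lam 1) / aut_weight q lam"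
  using qpoch_step_nonneg[of q M] aut_weight_pos[of q lam] power_le_one[of t M]
  by (simp add: state_weight_def divide_right_mono mult_left_le_one_le)

lemma state_weight_nonzero_imp_valid_state:
  "(q :: real) > 1 \<Longrightarrow> is_partition lam \<Longrightarrow> state_weight q t M lam \<noteq> 0 \<Longrightarrow> valid_state (Suc M) lam"
  using qpoch_step_nonzero_imp[of q M "col_len lam 1"] by (auto simp: state_weight_def valid_state_def)

lemma col_len_1_pos: "lam \<in> partitions_of (Suc j) \<Longrightarrow> 1 \<le> col_len lam 1"
  using col_len_1[of lam] by (cases lam) (auto simp: partitions_of_def)

lemma after_head_regroup:
  assumes q: "q > 1"
  shows "(\<Sum>lam\<in>partitions_of j. qpoch q (1 / q ^ Suc n) (col_len lam 1) / aut_weight q lam * after_head q r (Suc n) lam mu)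
       = q ^ Suc n * (\<Sum>nu\<in>partitions_of (Suc j).
            qpoch_step q n (col_len nu 1) / aut_weight q nu * proc_prob q r (Suc n) nu mu)"
proof -
  define x where "x = 1 / q ^ Suc n"
  define P where "P = (\<lambda>nu. proc_prob q r (Suc n) nu mu)"
  have "after_head q r (Suc n) lam mu
      = (\<Sum>s\<in>{1..Suc (first_part lam)}. box_weight q x lam s * P (add_box lam s)) / (1 - x)" for lam
    unfolding after_head_def sum_divide_distrib P_def x_def
    by (rule sum.cong) (simp_all add: step2_prob_eq_box_weight[OF q])
  then have "(\<Sum>lam\<in>partitions_of j. qpoch q x (col_len lam 1) / aut_weight q lam * after_head q r (Suc n) lam mu)
      = (\<Sum>lam\<in>partitions_of j. \<Sum>s\<in>{1..Suc (first_part lam)}.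
          qpoch q x (col_len lam 1) / aut_weight q lam * box_weight q x lam s * P (add_box lam s)) / (1 - x)"
    by (simp add: sum_divide_distrib sum_distrib_left mult.assoc del: sum.cl_ivl_Suc)
  also have "\<dots> = (\<Sum>nu\<in>partitions_of (Suc j).
      qpoch q x (col_len nu 1) * (q ^ col_len nu 1 - 1) / (1 - x) / aut_weight q nu * P nu)"
    unfolding sum_add_box_regroup[OF q] sum_divide_distrib by (rule sum.cong) simp_all
  also have "\<dots> = q ^ Suc n * (\<Sum>nu\<in>partitions_of (Suc j). qpoch_step q n (col_len nu 1) / aut_weight q nu * P nu)"
    unfolding x_def qpoch_step_eq[OF q] sum_distrib_left by (simp add: mult_ac)
  finally show ?thesis by (simp add: x_def P_def)
qed

lemma diagonal_term_regroup:
  fixes q :: real and r :: nat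
  assumes q: "q > 1" and j: "1 \<le> j"
  defines "t \<equiv> 1 / q ^ Suc r"
  shows "(\<Sum>M\<le>n. \<Sum>lam\<in>partitions_of j.
            state_weight q t M lam * (t ^ (n - M) * (1 - t) * after_head q r (Suc M + (n - M)) lam mu))
       = q * (1 - t) * (\<Sum>nu\<in>partitions_of (Suc j). state_weight q (1 / q ^ r) n nu * proc_prob q r (Suc n) nu mu)"
proof -
  define A where "A = (\<lambda>lam. t ^ n * (1 - t) / aut_weight q lam * after_head q r (Suc n) lam mu)"
  have "(\<Sum>M\<le>n. \<Sum>lam\<in>partitions_of j.
            state_weight q t M lam * (t ^ (n - M) * (1 - t) * after_head q r (Suc M + (n - M)) lam mu))
      = (\<Sum>M\<le>n. \<Sum>lam\<in>partitions_of j. qpoch_step q M (col_len lam 1) * A lam)"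
  proof (intro sum.cong refl)
    fix M lam assume "M \<in> {..n}"
    then obtain d where "n = M + d" using le_Suc_ex by auto
    then show "state_weight q t M lam * (t ^ (n - M) * (1 - t) * after_head q r (Suc M + (n - M)) lam mu)
        = qpoch_step q M (col_len lam 1) * A lam"
      by (simp add: state_weight_def A_def power_add divide_inverse mult_ac)
  qed
  also have "\<dots> = (\<Sum>lam\<in>partitions_of j. qpoch q (1 / q ^ Suc n) (col_len lam 1) * A lam)"
  proof -
    obtain i where "j = Suc i" using j by (cases j) auto
    then have "(\<Sum>M\<le>n. qpoch_step q M (col_len lam 1)) = qpoch q (1 / q ^ Suc n) (col_len lam 1)"
      if "lam \<in> partitions_of j" for lam
      using that col_len_1_pos sum_qpoch_step_atMost by blast
    then show ?thesis
      by (subst sum.swap) (simp add: sum_distrib_right[symmetric])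
  qed
  also have "\<dots> = t ^ n * (1 - t) * q ^ Suc n * (\<Sum>nu\<in>partitions_of (Suc j).
      qpoch_step q n (col_len nu 1) / aut_weight q nu * proc_prob q r (Suc n) nu mu)"
  proof -
    have "(\<Sum>lam\<in>partitions_of j. qpoch q (1 / q ^ Suc n) (col_len lam 1) * A lam)
        = t ^ n * (1 - t) * (\<Sum>lam\<in>partitions_of j.
            qpoch q (1 / q ^ Suc n) (col_len lam 1) / aut_weight q lam * after_head q r (Suc n) lam mu)"
      by (simp add: A_def sum_distrib_left divide_inverse mult_ac)
    then show ?thesis by (simp only: after_head_regroup[OF q] mult.assoc)
  qed
  also have "t ^ n * (1 - t) * q ^ Suc n = q * (1 - t) * (1 / q ^ r) ^ n"
  proof -
    have "t * q = 1 / q ^ r" using q by (simp add: t_def)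
    moreover have "t ^ n * (1 - t) * q ^ Suc n = q * (1 - t) * (t * q) ^ n"
      by (simp add: power_mult_distrib)
    ultimately show ?thesis by simp
  qed
  finally show ?thesis
    by (simp add: state_weight_def sum_distrib_left divide_inverse mult_ac)
qed

lemma state_weight_head_sums:
  fixes q :: real and r :: nat
  assumes q: "q > 1" and lam: "is_partition lam"
  defines "t \<equiv> 1 / q ^ Suc r"
  shows "(\<lambda>k. state_weight q t M lam * (t ^ k * (1 - t) * after_head q r (Suc M + k) lam mu))
           sums (state_weight q t M lam * proc_prob q (Suc r) (Suc M) lam mu)"
proof (cases "state_weight q t M lam = 0")
  case False
  then have "valid_state (Suc M) lam"
    using state_weight_nonzero_imp_valid_state[OF q lam] by blast
  from summable_proc_prob_Suc[OF q this]
  have "(\<lambda>k. t ^ k * (1 - t) * after_head q r (Suc M + k) lam mu) sums proc_prob q (Suc r) (Suc M) lam mu"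
    unfolding proc_prob_Suc t_def by (simp add: summable_sums)
  then show ?thesis by (rule sums_mult)
qed simp

lemma state_weight_head_nonneg:
  fixes q :: real and r :: nat
  assumes q: "q > 1" and lam: "is_partition lam"
  defines "t \<equiv> 1 / q ^ Suc r"
  shows "0 \<le> state_weight q t M lam * (t ^ k * (1 - t) * after_head q r (Suc M + k) lam mu)"
proof (cases "state_weight q t M lam = 0")
  case False
  have t: "0 \<le> t" "t < 1" using inverse_power_Suc_bounds[OF q] by (auto simp: t_def)
  have "0 \<le> after_head q r (Suc M + k) lam mu"
    using after_head_bounds[OF q valid_state_mono[OF state_weight_nonzero_imp_valid_state[OF q lam False] le_add1]
        proc_prob_bounds[OF q]] by blast
  then show ?thesis using state_weight_nonneg[OF q t(1)] t by simp
qed simp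

lemma state_weight_proc_prob_bounds:
  assumes q: "q > 1" and lam: "is_partition lam" and t: "0 \<le> t" "t \<le> 1"
  shows "0 \<le> state_weight q t M lam * proc_prob q r (Suc M) lam mu \<and>
    state_weight q t M lam * proc_prob q r (Suc M) lam mu \<le> qpoch_step q M (col_len lam 1) / aut_weight q lam"
proof -
  have w: "0 \<le> state_weight q t M lam" "state_weight q t M lam \<le> qpoch_step q M (col_len lam 1) / aut_weight q lam"
    using state_weight_nonneg[OF q t(1)] state_weight_le[OF q t] by auto
  show ?thesis
  proof (cases "state_weight q t M lam = 0")
    case False
    have "0 \<le> proc_prob q r (Suc M) lam mu \<and> proc_prob q r (Suc M) lam mu \<le> 1"
      by (rule proc_prob_bounds[OF q state_weight_nonzero_imp_valid_state[OF q lam False]])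
    then show ?thesis using w by (auto intro: order_trans[OF mult_left_le])
  qed (use w in simp)
qed

lemma summable_mixed_proc_prob:
  assumes q: "q > 1" and j: "1 \<le> j"
  shows "summable (\<lambda>M. \<Sum>lam\<in>partitions_of j. state_weight q (1 / q ^ r) M lam * proc_prob q r (Suc M) lam mu)"
proof (rule summable_comparison_test')
  show "summable (\<lambda>M. \<Sum>lam\<in>partitions_of j. qpoch_step q M (col_len lam 1) / aut_weight q lam)"
  proof (intro summable_sum summable_divide)
    fix lam assume "lam \<in> partitions_of j"
    then have "1 \<le> col_len lam 1" using j col_len_1_pos[of lam "j - 1"] by simp
    then show "summable (\<lambda>M. qpoch_step q M (col_len lam 1))"
      using qpoch_step_sums[OF q] sums_summable by blast
  qed
next
  fix M
  have "0 \<le> 1 / q ^ r" "1 / q ^ r \<le> 1" using q by simp_all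
  then have bnd: "0 \<le> state_weight q (1 / q ^ r) M lam * proc_prob q r (Suc M) lam mu \<and>
      state_weight q (1 / q ^ r) M lam * proc_prob q r (Suc M) lam mu
        \<le> qpoch_step q M (col_len lam 1) / aut_weight q lam" if "lam \<in> partitions_of j" for lam
    using state_weight_proc_prob_bounds[OF q] that by (simp add: mem_partitions_of_iff)
  have "0 \<le> (\<Sum>lam\<in>partitions_of j. state_weight q (1 / q ^ r) M lam * proc_prob q r (Suc M) lam mu)"
    by (rule sum_nonneg) (use bnd in blast)
  moreover have "(\<Sum>lam\<in>partitions_of j. state_weight q (1 / q ^ r) M lam * proc_prob q r (Suc M) lam mu)
      \<le> (\<Sum>lam\<in>partitions_of j. qpoch_step q M (col_len lam 1) / aut_weight q lam)"
    by (rule sum_mono) (use bnd in blast)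
  ultimately show "norm (\<Sum>lam\<in>partitions_of j. state_weight q (1 / q ^ r) M lam * proc_prob q r (Suc M) lam mu)
      \<le> (\<Sum>lam\<in>partitions_of j. qpoch_step q M (col_len lam 1) / aut_weight q lam)"
    by simp
qed

lemma mixed_proc_prob_Suc:
  assumes q: "q > 1" and j: "1 \<le> j"
  shows "mixed_proc_prob q (Suc r) j mu = q * (1 - 1 / q ^ Suc r) * mixed_proc_prob q r (Suc j) mu"
proof -
  define t where "t = 1 / q ^ Suc r"
  have t: "0 \<le> t" "t < 1" using inverse_power_Suc_bounds[OF q] by (auto simp: t_def)
  define P where "P = partitions_of j"
  have lam: "is_partition lam" if "lam \<in> P" for lam
    using that by (simp add: P_def mem_partitions_of_iff)
  \<comment> \<open>\<open>f M k\<close>: a head at value \<open>Suc M\<close> after exactly \<open>k\<close> tails at counter \<open>Suc r\<close>\<close>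
  define f where "f = (\<lambda>M k. \<Sum>lam\<in>P. state_weight q t M lam * (t ^ k * (1 - t) * after_head q r (Suc M + k) lam mu))"
  have f_nonneg: "0 \<le> f M k" for M k
    unfolding f_def t_def using state_weight_head_nonneg[OF q lam] by (blast intro: sum_nonneg)
  have f_sums: "f M sums (\<Sum>lam\<in>P. state_weight q t M lam * proc_prob q (Suc r) (Suc M) lam mu)" for M
    unfolding f_def t_def by (rule sums_sum, rule state_weight_head_sums[OF q lam])
  have row_sums: "summable (\<lambda>M. \<Sum>k. f M k)"
    using summable_mixed_proc_prob[OF q j, of "Suc r" mu] unfolding sums_unique[OF f_sums, symmetric]
    by (simp add: P_def t_def)
  define g where "g = (\<lambda>n. \<Sum>nu\<in>partitions_of (Suc j).
      state_weight q (1 / q ^ r) n nu * proc_prob q r (Suc n) nu mu)"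
  have "(\<Sum>M\<le>n. f M (n - M)) = q * (1 - t) * g n" for n
    unfolding f_def P_def t_def g_def by (rule diagonal_term_regroup[OF q j])
  moreover have "(\<Sum>M. \<Sum>k. f M k) = mixed_proc_prob q (Suc r) j mu"
    unfolding mixed_proc_prob_def t_def[symmetric] P_def[symmetric] using f_sums sums_unique by metis
  ultimately have "(\<lambda>n. q * (1 - t) * g n) sums mixed_proc_prob q (Suc r) j mu"
    using sums_diagonal_nonneg[OF f_nonneg sums_summable[OF f_sums] row_sums] by simp
  from sums_divide[OF this, of "q * (1 - t)"]
  have "g sums (mixed_proc_prob q (Suc r) j mu / (q * (1 - t)))"
    using q t by simp
  moreover have "mixed_proc_prob q r (Suc j) mu = suminf g"
    by (simp add: mixed_proc_prob_def g_def)
  ultimately have "mixed_proc_prob q r (Suc j) mu = mixed_proc_prob q (Suc r) j mu / (q * (1 - t))"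
    using sums_unique by metis
  then show ?thesis
    using q t unfolding t_def[symmetric] by (simp add: field_simps)
qed

lemma proc_prob_Suc_start:
  assumes q: "q > 1"
  shows "proc_prob q (Suc r) 1 [] mu = q * (1 - 1 / q ^ Suc r) * mixed_proc_prob q r 1 mu"
proof -
  define t where "t = 1 / q ^ Suc r"
  have "q \<noteq> 0" "q - 1 \<noteq> 0" "1 - t \<noteq> 0" using q inverse_power_Suc_bounds[OF q, of r] by (auto simp: t_def)
  have "after_head q r (1 + k) [] mu = proc_prob q r (Suc k) [1] mu" for k
  proof -
    have "q ^ Suc k > 1" using q by (simp del: power_Suc)
    then show ?thesis using \<open>q \<noteq> 0\<close>
      by (simp add: after_head_def first_part_def step2_prob_def col_len_def add_box_def power_int_add)
  qed
  moreover have "valid_state 1 []" by (simp add: valid_state_def is_partition_def col_len_def)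
  ultimately have series: "(\<lambda>M. t ^ M * (1 - t) * proc_prob q r (Suc M) [1] mu) sums proc_prob q (Suc r) 1 [] mu"
    using summable_proc_prob_Suc[OF q, of 1 "[]" r mu] unfolding proc_prob_Suc t_def
    by (simp add: summable_sums)
  have "t ^ M * (1 - t) * proc_prob q r (Suc M) [1] mu
      = q * (1 - t) * (state_weight q (1 / q ^ r) M [1] * proc_prob q r (Suc M) [1] mu)" for M
  proof -
    have "aut_weight q [1] = q - 1"
      using q by (simp add: aut_weight_def first_part_def col_len_def qpoch_inv_def power_int_neg_nat
          right_diff_distrib)
    moreover have "qpoch_step q M (col_len [1] 1) = (q - 1) / q ^ Suc M"
      using \<open>q \<noteq> 0\<close> by (simp add: qpoch_step_def qpoch_def col_len_def field_simps)
    ultimately have "state_weight q (1 / q ^ r) M [1] = (1 / q ^ r) ^ M / q ^ Suc M"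
      using \<open>q - 1 \<noteq> 0\<close> by (simp add: state_weight_def)
    also have "\<dots> = t ^ M / q"
      using \<open>q \<noteq> 0\<close> by (simp add: t_def power_mult_distrib power_one_over)
    finally show ?thesis using \<open>q \<noteq> 0\<close> by simp
  qed
  with series have "(\<lambda>M. q * (1 - t) * (state_weight q (1 / q ^ r) M [1] * proc_prob q r (Suc M) [1] mu))
      sums proc_prob q (Suc r) 1 [] mu" by (simp only:)
  from sums_divide[OF this, of "q * (1 - t)"]
  have "(\<lambda>M. state_weight q (1 / q ^ r) M [1] * proc_prob q r (Suc M) [1] mu)
      sums (proc_prob q (Suc r) 1 [] mu / (q * (1 - t)))"
    using \<open>q \<noteq> 0\<close> \<open>1 - t \<noteq> 0\<close> by simp
  then have "mixed_proc_prob q r 1 mu = proc_prob q (Suc r) 1 [] mu / (q * (1 - t))"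
    unfolding mixed_proc_prob_def partitions_of_1 by (simp add: sums_iff)
  then show ?thesis using \<open>q \<noteq> 0\<close> \<open>1 - t \<noteq> 0\<close> by (simp add: t_def field_simps)
qed

lemma sum_proc_prob_0_regroup:
  assumes q: "q > 1" and mu: "mu \<in> partitions_of (Suc j)"
  shows "(\<Sum>lam\<in>partitions_of j. proc_prob q 0 N lam mu / aut_weight q lam)
       = (q ^ col_len mu 1 - 1) / aut_weight q mu"
proof -
  have "(\<Sum>lam\<in>partitions_of j. proc_prob q 0 N lam mu / aut_weight q lam)
      = (\<Sum>lam\<in>partitions_of j. \<Sum>s\<in>{1..Suc (first_part lam)}.
          qpoch q 0 (col_len lam 1) / aut_weight q lam * box_weight q 0 lam s * (if add_box lam s = mu then 1 else 0))"
    by (simp add: qpoch_def box_weight_def sum_divide_distrib del: sum.cl_ivl_Suc)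
  also have "\<dots> = (\<Sum>nu\<in>partitions_of (Suc j).
      qpoch q 0 (col_len nu 1) * (q ^ col_len nu 1 - 1) / aut_weight q nu * (if nu = mu then 1 else 0))"
    by (rule sum_add_box_regroup[OF q])
  also have "\<dots> = (q ^ col_len mu 1 - 1) / aut_weight q mu"
    using mu finite_partitions_of[of "Suc j"] by (simp add: qpoch_def if_distrib sum.delta' cong: if_cong)
  finally show ?thesis .
qed

lemma mixed_proc_prob_0:
  assumes q: "q > 1" and j: "1 \<le> j" and mu: "mu \<in> partitions_of (Suc j)"
  shows "mixed_proc_prob q 0 j mu = (q ^ col_len mu 1 - 1) / aut_weight q mu"
proof -
  have "(\<lambda>M. qpoch_step q M (col_len lam 1) * (proc_prob q 0 1 lam mu / aut_weight q lam))
      sums (proc_prob q 0 1 lam mu / aut_weight q lam)" if "lam \<in> partitions_of j" for lam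
  proof -
    have "1 \<le> col_len lam 1" using col_len_1_pos[of lam "j - 1"] that j by simp
    from sums_mult2[OF qpoch_step_sums[OF q this]] show ?thesis unfolding mult_1 .
  qed
  then have "(\<lambda>M. \<Sum>lam\<in>partitions_of j. qpoch_step q M (col_len lam 1) * (proc_prob q 0 1 lam mu / aut_weight q lam))
      sums (\<Sum>lam\<in>partitions_of j. proc_prob q 0 1 lam mu / aut_weight q lam)"
    by (rule sums_sum)
  moreover have "proc_prob q 0 N lam mu = proc_prob q 0 1 lam mu" for N lam
    by simp
  ultimately show ?thesis
    using sum_proc_prob_0_regroup[OF q mu, of 1]
    by (simp add: mixed_proc_prob_def state_weight_def sums_iff mult_ac)
qed

lemma proc_prob_proportional_mixed:
  assumes q: "q > 1" and j: "1 \<le> j"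
  shows "\<exists>C. \<forall>mu. proc_prob q (r + j) 1 [] mu = C * mixed_proc_prob q r j mu"
  using j
proof (induction j arbitrary: r rule: nat_induct_at_least)
  case base
  show ?case using proc_prob_Suc_start[OF q, of r] by auto
next
  case (Suc j)
  then obtain C where "\<forall>mu. proc_prob q (Suc r + j) 1 [] mu = C * mixed_proc_prob q (Suc r) j mu"
    by blast
  then have "\<forall>mu. proc_prob q (r + Suc j) 1 [] mu = C * (q * (1 - 1 / q ^ Suc r)) * mixed_proc_prob q r (Suc j) mu"
    using mixed_proc_prob_Suc[OF q Suc.hyps] by simp
  then show ?case by blast
qed

lemma proc_prob_proportional:
  assumes q: "q > 1"
  shows "\<exists>K. \<forall>mu\<in>partitions_of (Suc n). proc_prob q n 1 [] mu = K * ((q ^ col_len mu 1 - 1) / aut_weight q mu)"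
proof (cases n)
  case 0
  have "\<forall>mu\<in>partitions_of (Suc 0). proc_prob q 0 1 [] mu = 1 * ((q ^ col_len mu 1 - 1) / aut_weight q mu)"
    using sum_proc_prob_0_regroup[OF q, of _ 0 1] by (simp add: partitions_of_0 aut_weight_Nil)
  with 0 show ?thesis by blast
next
  case (Suc m)
  then obtain C where "\<forall>mu. proc_prob q n 1 [] mu = C * mixed_proc_prob q 0 n mu"
    using proc_prob_proportional_mixed[OF q, of n 0] by auto
  then show ?thesis using mixed_proc_prob_0[OF q] Suc by auto
qed

section \<open>Comparison with \<open>N\<^sub>u\<^sub>,\<^sub>q\<close>\<close>

lemma prodinf_one_minus_nonzero:
  assumes q: "(q :: real) > 1" and u: "0 < u" "u < 1"
  shows "prodinf (\<lambda>r. 1 - u / q ^ Suc r) \<noteq> 0"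
proof (rule prodinf_nonzero)
  have "summable (\<lambda>i. u / q * (1 / q) ^ i)"
    using q by (intro summable_mult summable_geometric) auto
  moreover have "norm ((1 - u / q ^ Suc i) - 1) = u / q * (1 / q) ^ i" for i
    using q u by (simp add: power_one_over)
  ultimately show "convergent_prod (\<lambda>r. 1 - u / q ^ Suc r)"
    by (intro abs_convergent_prod_imp_convergent_prod summable_imp_abs_convergent_prod) simp
  show "1 - u / q ^ Suc i \<noteq> 0" for i
    using q u one_le_power[of q "Suc i"] by (simp add: divide_less_eq)
qed

lemma Nuq_eq_aut_weight:
  assumes "nu \<in> partitions_of (Suc n)"
  shows "Nuq u q nu = prodinf (\<lambda>r. 1 - u / q ^ Suc r) * u ^ n * ((q ^ col_len nu 1 - 1) / aut_weight q nu)"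
  using assms by (simp add: Nuq_def aut_weight_def partitions_of_def mult_ac)

theorem theorem3p8:
  fixes q u :: real and n :: nat and mu :: "nat list"
  assumes "q > 1" and "0 < u" and "u < 1"
    and "mu \<in> partitions_of (Suc n)"
  shows "proc_prob q n 1 [] mu = Nuq u q mu / (\<Sum>nu\<in>partitions_of (Suc n). Nuq u q nu)"
proof -
  define w where "w = (\<lambda>nu. (q ^ col_len nu 1 - 1) / aut_weight q nu)"
  define c where "c = prodinf (\<lambda>r. 1 - u / q ^ Suc r) * u ^ n"
  obtain K where K: "\<forall>nu\<in>partitions_of (Suc n). proc_prob q n 1 [] nu = K * w nu"
    using proc_prob_proportional[OF assms(1)] unfolding w_def by blast
  have "valid_state 1 []" by (simp add: valid_state_def is_partition_def col_len_def)
  then have "(\<Sum>nu\<in>partitions_of (Suc n). K * w nu) = 1"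
    using sum_proc_prob[OF assms(1), of 1 "[]" n] K by simp
  then have "K = 1 / (\<Sum>nu\<in>partitions_of (Suc n). w nu)"
    by (auto simp: sum_distrib_left[symmetric] eq_divide_eq)
  moreover have "c \<noteq> 0"
    using prodinf_one_minus_nonzero[OF assms(1-3)] assms(2) by (simp add: c_def)
  moreover have "(\<Sum>nu\<in>partitions_of (Suc n). Nuq u q nu) = c * (\<Sum>nu\<in>partitions_of (Suc n). w nu)"
    unfolding sum_distrib_left
    by (rule sum.cong) (simp_all add: Nuq_eq_aut_weight c_def w_def)
  ultimately show ?thesis
    using K assms(2,4) Nuq_eq_aut_weight[OF assms(4), of u q] by (simp add: c_def w_def)
qed

end
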